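(* Let $2\le n\le6$ and $0<\lambda<1$. For $f:[0,\pi/2]\to(0,\infty)$ set $$S_{n,\lambda}(f)=\int_0^{\pi/2}\sqrt{(f')^2+\lambda^2f^2}\,f^{n-1}\cos^{n-1}\theta\,d\theta .$$ Consider the ODE $$\left(\frac{f'\cos^{n-1}\theta}{\sqrt{(f')^2+\lambda^2f^2}}\right)'-\frac{n\lambda^2f\cos^{n-1}\theta}{\sqrt{(f')^2+\lambda^2f^2}}=0,\qquad f(0)=1,\ f'(0)=A.$$ If for some $A$ the solution $f$ can be extended to $[0,\pi/2]$ and is a minimizer of $S_{n,\lambda}$ (among functions $g$ with $g(0)=1$), then $S_{n,\lambda}(f)<\frac1n$; consequently the totally geodesic hypercone $C(S^{n-1}(\lambda))$ is not area-minimizing in $C(S^n(\lambda))$.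
   Context: $C(S^n(\lambda))$ is the cone over the round $n$-sphere of radius $\lambda$, modelled as $\mathbb{R}^{n+1}$ with metric $dr^2+\lambda^2r^2g_{S^n}$; $C(S^{n-1}(\lambda))$ is the cone over the equator. For a rotationally symmetric hypersurface given in polar coordinates by $r=f(\theta)$, $\theta\in[0,\pi/2]$ the polar angle from the equatorial hyperplane, its area is $n\omega_n\lambda^{n-1}S_{n,\lambda}(f)$, while the truncated cone $C(S^{n-1}(\lambda))\cap\{r\le1\}$ has area $\omega_n\lambda^{n-1}$; the ODE is the Euler–Lagrange equation of $S_{n,\lambda}$. *)

theory Defs
  imports "HOL-Analysis.Analysis"
begin

text \<open>The functional S_{n,lambda}(f), where fd is the derivative of f on [0, pi/2].\<close>
definition S_fun :: "nat \<Rightarrow> real \<Rightarrow> (real \<Rightarrow> real) \<Rightarrow> (real \<Rightarrow> real) \<Rightarrow> real" where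
  "S_fun n lam f fd = integral {0..pi/2}
     (\<lambda>\<theta>. sqrt ((fd \<theta>)\<^sup>2 + lam\<^sup>2 * (f \<theta>)\<^sup>2) * (f \<theta>) ^ (n - 1) * (cos \<theta>) ^ (n - 1))"

definition admissible :: "(real \<Rightarrow> real) \<Rightarrow> (real \<Rightarrow> real) \<Rightarrow> bool" where
  "admissible g gd \<longleftrightarrow> g 0 = 1
     \<and> (\<forall>\<theta>\<in>{0..pi/2}. g \<theta> > 0 \<and> (g has_real_derivative gd \<theta>) (at \<theta> within {0..pi/2}))
     \<and> continuous_on {0..pi/2} gd"

end

theory Submission
  imports Defs
begin

text \<open>Multiplying the Euler--Lagrange equation by \<open>f\<^sup>n\<close> turns the integrand of \<open>S\<^sub>n\<^sub>,\<^sub>\<lambda>\<close> into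
  \<open>1/n\<close> times the derivative of the flux \<open>f\<^sup>n f' cos\<^bsup>n-1\<^esup>\<theta> / \<surd>(f'\<^sup>2 + \<lambda>\<^sup>2 f\<^sup>2)\<close>.
  The flux vanishes at \<open>\<pi>/2\<close> and equals \<open>A / \<surd>(A\<^sup>2 + \<lambda>\<^sup>2)\<close> at \<open>0\<close>, so
  \<open>S\<^sub>n\<^sub>,\<^sub>\<lambda>(f) = -A / (n \<surd>(A\<^sup>2 + \<lambda>\<^sup>2)) < 1/n\<close>.\<close>

lemma flux_has_derivative:
  fixes f fd w :: "real \<Rightarrow> real" and n :: nat and lam t :: real
  defines "s \<equiv> \<lambda>t. sqrt ((fd t)\<^sup>2 + lam\<^sup>2 * (f t)\<^sup>2)"
  assumes "n \<ge> 1" and "lam \<noteq> 0" and "f t \<noteq> 0"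
    and f_deriv: "(f has_real_derivative fd t) (at t within T)"
    and euler_lagrange: "((\<lambda>t. fd t * w t / s t) has_real_derivative
                           (real n * lam\<^sup>2 * f t * w t / s t)) (at t within T)"
  shows "((\<lambda>t. f t ^ n * (fd t * w t / s t)) has_real_derivative
           real n * (s t * f t ^ (n - 1) * w t)) (at t within T)"
proof -
  have s_sq: "(s t)\<^sup>2 = (fd t)\<^sup>2 + lam\<^sup>2 * (f t)\<^sup>2"
    unfolding s_def by simp
  have "s t > 0"
    unfolding s_def using assms(3,4) by (simp add: add_nonneg_pos)
  have f_pow: "f t ^ n = f t ^ (n - 1) * f t"
    using \<open>n \<ge> 1\<close> by (metis Suc_diff_le diff_Suc_1 power_Suc2)
  have "((\<lambda>t. f t ^ n * (fd t * w t / s t)) has_real_derivative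
          real n * f t ^ (n - 1) * fd t * (fd t * w t / s t)
          + f t ^ n * (real n * lam\<^sup>2 * f t * w t / s t)) (at t within T)"
    using DERIV_mult[OF DERIV_power[OF f_deriv] euler_lagrange] by (simp add: mult_ac)
  moreover have "real n * f t ^ (n - 1) * fd t * (fd t * w t / s t)
          + f t ^ n * (real n * lam\<^sup>2 * f t * w t / s t)
        = real n * f t ^ (n - 1) * w t * (s t)\<^sup>2 / s t"
    unfolding s_sq f_pow by (simp add: power2_eq_square add_divide_distrib algebra_simps)
  ultimately show ?thesis
    using \<open>s t > 0\<close> by (simp add: power2_eq_square mult_ac)
qed

lemma S_fun_of_euler_lagrange:
  fixes n :: nat and lam :: real and f fd :: "real \<Rightarrow> real"
  assumes "n \<ge> 2" and "lam \<noteq> 0"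
    and f_deriv: "\<And>\<theta>. \<theta> \<in> {0..pi/2} \<Longrightarrow>
                    f \<theta> > 0 \<and> (f has_real_derivative fd \<theta>) (at \<theta> within {0..pi/2})"
    and fd_cont: "continuous_on {0..pi/2} fd"
    and euler_lagrange: "\<And>\<theta>. \<theta> \<in> {0..<pi/2} \<Longrightarrow>
           ((\<lambda>t. fd t * (cos t) ^ (n - 1) / sqrt ((fd t)\<^sup>2 + lam\<^sup>2 * (f t)\<^sup>2))
              has_real_derivative
              (real n * lam\<^sup>2 * f \<theta> * (cos \<theta>) ^ (n - 1) / sqrt ((fd \<theta>)\<^sup>2 + lam\<^sup>2 * (f \<theta>)\<^sup>2)))
           (at \<theta> within {0..pi/2})"
  shows "S_fun n lam f fd = - (f 0 ^ n * fd 0 / sqrt ((fd 0)\<^sup>2 + lam\<^sup>2 * (f 0)\<^sup>2)) / real n"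
proof -
  define s where "s t = sqrt ((fd t)\<^sup>2 + lam\<^sup>2 * (f t)\<^sup>2)" for t
  define flux where "flux t = f t ^ n * (fd t * (cos t) ^ (n - 1) / s t)" for t
  have f_cont: "continuous_on {0..pi/2} f"
    using f_deriv DERIV_continuous continuous_on_eq_continuous_within by blast
  have s_pos: "s t > 0" if "t \<in> {0..pi/2}" for t
    unfolding s_def using f_deriv[OF that] \<open>lam \<noteq> 0\<close> by (simp add: add_nonneg_pos)
  have "continuous_on {0..pi/2} flux"
    unfolding flux_def s_def
    by (intro continuous_intros f_cont fd_cont) (use s_pos s_def in force)
  moreover have "(flux has_real_derivative
                   real n * (s t * f t ^ (n - 1) * (cos t) ^ (n - 1))) (at t)"
    if t: "t \<in> {0<..<pi/2}" for t
  proof -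
    have at_t: "at t within {0..pi/2} = at t"
      using t by (intro at_within_interior) auto
    show ?thesis
      unfolding flux_def s_def
      by (rule flux_has_derivative[where T = UNIV])
        (use t \<open>n \<ge> 2\<close> \<open>lam \<noteq> 0\<close> f_deriv[of t] euler_lagrange[of t] at_t in auto)
  qed
  ultimately have "((\<lambda>t. real n * (s t * f t ^ (n - 1) * (cos t) ^ (n - 1)))
                     has_integral flux (pi/2) - flux 0) {0..pi/2}"
    by (intro fundamental_theorem_of_calculus_interior)
      (auto simp: has_real_derivative_iff_has_vector_derivative[symmetric])
  then have "((\<lambda>t. s t * f t ^ (n - 1) * (cos t) ^ (n - 1))
               has_integral (flux (pi/2) - flux 0) / real n) {0..pi/2}"
    using \<open>n \<ge> 2\<close> by (simp add: has_integral_mult_right_iff)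
  moreover have "flux (pi/2) = 0"
    unfolding flux_def using \<open>n \<ge> 2\<close> by simp
  ultimately have "((\<lambda>t. s t * f t ^ (n - 1) * (cos t) ^ (n - 1))
                     has_integral - flux 0 / real n) {0..pi/2}"
    by simp
  then show ?thesis
    unfolding S_fun_def by (simp add: integral_unique flux_def s_def)
qed

lemma neg_div_sqrt_sq_add_less_1:
  fixes a b :: real
  assumes "b \<noteq> 0"
  shows "- a / sqrt (a\<^sup>2 + b\<^sup>2) < 1"
proof -
  have "\<bar>a\<bar> < sqrt (a\<^sup>2 + b\<^sup>2)"
    using real_sqrt_less_mono[of "a\<^sup>2" "a\<^sup>2 + b\<^sup>2"] assms by simp
  then show ?thesis
    using assms by (simp add: abs_less_iff divide_less_eq less_divide_eq add_nonneg_pos)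
qed

theorem lemma5p5:
  fixes n :: nat and lam A :: real and f fd :: "real \<Rightarrow> real"
  assumes "2 \<le> n" and "n \<le> 6"
    and "0 < lam" and "lam < 1"
    and "\<forall>\<theta>\<in>{0..pi/2}. f \<theta> > 0 \<and> (f has_real_derivative fd \<theta>) (at \<theta> within {0..pi/2})"
    and "continuous_on {0..pi/2} fd"
    and "f 0 = 1" and "fd 0 = A"
    and "\<forall>\<theta>\<in>{0..<pi/2}.
           ((\<lambda>t. fd t * (cos t) ^ (n - 1) / sqrt ((fd t)\<^sup>2 + lam\<^sup>2 * (f t)\<^sup>2))
              has_real_derivative
              (real n * lam\<^sup>2 * f \<theta> * (cos \<theta>) ^ (n - 1) / sqrt ((fd \<theta>)\<^sup>2 + lam\<^sup>2 * (f \<theta>)\<^sup>2)))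
           (at \<theta> within {0..pi/2})"
    and "\<forall>g gd. admissible g gd \<longrightarrow> S_fun n lam f fd \<le> S_fun n lam g gd"
  shows "S_fun n lam f fd < 1 / real n"
proof -
  have "S_fun n lam f fd = - A / sqrt (A\<^sup>2 + lam\<^sup>2) / real n"
    using S_fun_of_euler_lagrange[of n lam f fd] assms(1,3,5,6,7,8,9) by simp
  also have "\<dots> < 1 / real n"
    by (rule divide_strict_right_mono)
      (use neg_div_sqrt_sq_add_less_1[of lam A] assms(1,3) in auto)
  finally show ?thesis .
qed

end
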